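(* Let $K\ge3$, $L\in\{3,\dots,K\}$, and $p_1>p_2\ge\cdots\ge p_K>0$ with $\sum_kp_k=1$. Let $n_1\ge n_2\ge\cdots\ge n_{L-1}\ge1$ and $n$ be integers with $0\le n-\sum_{t=1}^{L-1}n_t\le (K-L+1)\,n_{L-1}$. For every tuple $(i_1,\dots,i_{L-1})$ of distinct indices in $\{1,\dots,K\}$, let $I=\{i_1,\dots,i_{L-1}\}$, $\bar n=n-\sum_{t=1}^{L-1}n_t$, $$S_{i_1,\dots,i_{L-1}}:=\sum_{\mathbf r}\frac{\bar n!}{\prod_{j\notin I}r_j!}\prod_{j\notin I}p_j^{r_j},$$ the sum over $\mathbf r=(r_j)_{j\notin I}$ of nonnegative integers with $\sum_{j\notin I}r_j=\bar n$ and $\max_{j\notin I}r_j\le n_{L-1}$, and $A_{i_1,\dots,i_{L-1}}:=S_{i_1,\dots,i_{L-1}}\prod_{t=1}^{L-1}p_{i_t}^{n_t}$. Then $$\max_{i_2,\dots,i_{L-1}}A_{1,i_2,\dots,i_{L-1}}=A_{1,2,\dots,L-1},\qquad \max_{i_1\ne1}A_{i_1,i_2,\dots,i_{L-1}}=A_{2,1,3,\dots,L-1},$$ where the maxima are over tuples of distinct indices (the first with $i_1=1$ fixed, the second over all tuples with $i_1\ne1$).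
   Context: $n_1,\dots,n_{L-1}$ play the role of the $L-1$ largest occurrence counts among $n$ i.i.d. samples from $(p_1,\dots,p_K)$, so the remaining $\bar n$ samples fall on the other answers each at most $n_{L-1}$ times. *)

theory Defs
  imports Complex_Main
begin

definition trunc_counts :: "nat set \<Rightarrow> nat \<Rightarrow> nat \<Rightarrow> (nat \<Rightarrow> nat) set" where
  "trunc_counts J m N = {r. (\<forall>j. j \<notin> J \<longrightarrow> r j = 0) \<and> (\<forall>j\<in>J. r j \<le> m) \<and> (\<Sum>j\<in>J. r j) = N}"

definition S_sum :: "(nat \<Rightarrow> real) \<Rightarrow> nat set \<Rightarrow> nat \<Rightarrow> nat \<Rightarrow> real" where
  "S_sum p J m N = (\<Sum>r\<in>trunc_counts J m N.
      fact N / (\<Prod>j\<in>J. fact (r j)) * (\<Prod>j\<in>J. p j ^ r j))"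

definition A_val :: "nat \<Rightarrow> nat \<Rightarrow> (nat \<Rightarrow> real) \<Rightarrow> (nat \<Rightarrow> nat) \<Rightarrow> nat \<Rightarrow> (nat \<Rightarrow> nat) \<Rightarrow> real" where
  "A_val K L p nn n i =
     S_sum p ({1..K} - i ` {1..L-1}) (nn (L-1)) (n - (\<Sum>t=1..L-1. nn t))
     * (\<Prod>t=1..L-1. p (i t) ^ nn t)"

definition tuples :: "nat \<Rightarrow> nat \<Rightarrow> (nat \<Rightarrow> nat) set" where
  "tuples K L = {i. (\<forall>t\<in>{1..L-1}. i t \<in> {1..K}) \<and> inj_on i {1..L-1}}"

end

theory Submission
  imports Defs "HOL-Combinatorics.Transposition"
begin

text \<open>Two moves on a tuple never decrease A. Swapping two entries so that the heavier
  answer receives the larger count is the rearrangement inequality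
  x^e y^k \<le> y^e x^k for 0 \<le> x \<le> y and k \<le> e. Replacing an entry i_t by a heavier
  unused answer j is handled by relabelling the free answers with the transposition of
  i_t and j: termwise, the free answer's exponent r \<le> n_{L-1} \<le> n_t is then traded
  against the fixed exponent n_t, which is the same inequality. Filling the positions
  from left to right with the heaviest available answer therefore leads from any tuple
  with i_1 = 1 to (1, 2, ..., L-1), and from any tuple with i_1 \<noteq> 1, after first
  placing 1 at position 2 and 2 at position 1, to (2, 1, 3, ..., L-1).\<close>

lemma power_exchange_le:
  fixes x y :: real
  assumes "0 \<le> x" "x \<le> y" "k \<le> e"
  shows "x ^ e * y ^ k \<le> y ^ e * x ^ k"
proof -
  obtain d where e: "e = k + d" using assms(3) le_Suc_ex by blast
  have "(x ^ k * y ^ k) * x ^ d \<le> (x ^ k * y ^ k) * y ^ d"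
    using assms by (intro mult_left_mono power_mono) auto
  thus ?thesis unfolding e power_add by (simp add: algebra_simps)
qed

lemma stepwise_antitone_le:
  fixes f :: "nat \<Rightarrow> 'a::order"
  assumes step: "\<And>k. a \<le> k \<Longrightarrow> k < c \<Longrightarrow> f (Suc k) \<le> f k"
    and "a \<le> b" "b \<le> c"
  shows "f b \<le> f a"
  using \<open>a \<le> b\<close> \<open>b \<le> c\<close>
proof (induction b rule: dec_induct)
  case (step k)
  thus ?case using assms(1)[of k] by (meson Suc_le_lessD dual_order.trans less_imp_le_nat)
qed simp

lemma S_sum_nonneg: "(\<And>x. x \<in> J \<Longrightarrow> 0 \<le> p x) \<Longrightarrow> 0 \<le> S_sum p J m N"
  unfolding S_sum_def by (auto intro!: sum_nonneg mult_nonneg_nonneg divide_nonneg_nonneg prod_nonneg)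

lemma S_sum_image_involution:
  assumes inv: "\<And>x. \<sigma> (\<sigma> x) = x"
  shows "S_sum p (\<sigma> ` J) m N = S_sum (p \<circ> \<sigma>) J m N"
proof -
  have inj: "inj_on \<sigma> J'" for J' by (metis inv inj_onI)
  have mem: "\<sigma> x \<in> J \<longleftrightarrow> x \<in> \<sigma> ` J" for x
    by (metis image_iff inv)
  show ?thesis
    unfolding S_sum_def
  proof (rule sum.reindex_bij_witness[of _ "\<lambda>r. r \<circ> \<sigma>" "\<lambda>r. r \<circ> \<sigma>"])
    fix r assume r: "r \<in> trunc_counts (\<sigma> ` J) m N"
    thus "r \<circ> \<sigma> \<circ> \<sigma> = r" by (simp add: fun_eq_iff inv)
    show "r \<circ> \<sigma> \<in> trunc_counts J m N"
      using r unfolding trunc_counts_def by (auto simp: sum.reindex[OF inj]) (metis mem inv)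
    show "fact N / (\<Prod>j\<in>J. fact ((r \<circ> \<sigma>) j)) * (\<Prod>j\<in>J. (p \<circ> \<sigma>) j ^ (r \<circ> \<sigma>) j) =
          fact N / (\<Prod>j\<in>\<sigma> ` J. fact (r j)) * (\<Prod>j\<in>\<sigma> ` J. p j ^ r j)"
      by (simp add: prod.reindex[OF inj])
  next
    fix r assume r: "r \<in> trunc_counts J m N"
    thus "r \<circ> \<sigma> \<circ> \<sigma> = r" by (simp add: fun_eq_iff inv)
    show "r \<circ> \<sigma> \<in> trunc_counts (\<sigma> ` J) m N"
      using r unfolding trunc_counts_def by (auto simp: sum.reindex[OF inj] mem inv)
  qed
qed

lemma S_sum_raise_weight_le:
  assumes "finite J" "a \<in> J" and q: "\<And>x. x \<in> J - {a} \<Longrightarrow> q x = p x"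
    and nonneg: "\<And>x. x \<in> J \<Longrightarrow> 0 \<le> p x" and "p a \<le> q a" "m \<le> e"
  shows "p a ^ e * S_sum q J m N \<le> q a ^ e * S_sum p J m N"
  unfolding S_sum_def sum_distrib_left
proof (rule sum_mono)
  fix r assume "r \<in> trunc_counts J m N"
  hence "r a \<le> e" using assms unfolding trunc_counts_def by auto
  define C where "C = fact N / (\<Prod>j\<in>J. fact (r j)) * (\<Prod>j\<in>J - {a}. p j ^ r j)"
  have "0 \<le> C" unfolding C_def using nonneg by (auto intro!: mult_nonneg_nonneg divide_nonneg_nonneg prod_nonneg)
  have "p a ^ e * q a ^ r a \<le> q a ^ e * p a ^ r a"
    using power_exchange_le nonneg assms \<open>r a \<le> e\<close> by blast
  hence "p a ^ e * q a ^ r a * C \<le> q a ^ e * p a ^ r a * C"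
    using \<open>0 \<le> C\<close> by (rule mult_right_mono)
  moreover have "(\<Prod>j\<in>J. q j ^ r j) = q a ^ r a * (\<Prod>j\<in>J - {a}. p j ^ r j)"
    using prod.remove[OF assms(1,2), of "\<lambda>j. q j ^ r j"] q by simp
  moreover have "(\<Prod>j\<in>J. p j ^ r j) = p a ^ r a * (\<Prod>j\<in>J - {a}. p j ^ r j)"
    using prod.remove[OF assms(1,2)] .
  ultimately show "p a ^ e * (fact N / (\<Prod>j\<in>J. fact (r j)) * (\<Prod>j\<in>J. q j ^ r j))
     \<le> q a ^ e * (fact N / (\<Prod>j\<in>J. fact (r j)) * (\<Prod>j\<in>J. p j ^ r j))"
    unfolding C_def by (simp add: ac_simps)
qed

lemma S_sum_exchange_le:
  assumes "finite J" "a \<notin> J" "b \<notin> J"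
    and nonneg: "\<And>x. x \<in> insert a J \<Longrightarrow> 0 \<le> p x" and "p a \<le> p b" "m \<le> e"
  shows "p a ^ e * S_sum p (insert b J) m N \<le> p b ^ e * S_sum p (insert a J) m N"
proof -
  have "transpose a b ` insert a J = insert b J"
    using assms(2,3) by (auto simp: transpose_def image_iff)
  hence "S_sum p (insert b J) m N = S_sum (p \<circ> transpose a b) (insert a J) m N"
    using S_sum_image_involution[of "transpose a b"] by (metis transpose_involutory)
  moreover have "p a ^ e * S_sum (p \<circ> transpose a b) (insert a J) m N
      \<le> (p \<circ> transpose a b) a ^ e * S_sum p (insert a J) m N"
    using assms by (intro S_sum_raise_weight_le) (auto simp: transpose_def)
  ultimately show ?thesis by simp
qed

lemma A_val_cong:
  assumes "\<And>t. t \<in> {1..L-1} \<Longrightarrow> i t = g t"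
  shows "A_val K L p nn n i = A_val K L p nn n g"
proof -
  have "i ` {1..L-1} = g ` {1..L-1}" using assms by (auto intro: image_cong)
  moreover have "(\<Prod>t=1..L-1. p (i t) ^ nn t) = (\<Prod>t=1..L-1. p (g t) ^ nn t)"
    using assms by (auto intro: prod.cong)
  ultimately show ?thesis unfolding A_val_def by simp
qed

lemma tuples_fun_upd:
  assumes "i \<in> tuples K L" "j \<in> {1..K} - i ` {1..L-1}"
  shows "i(t := j) \<in> tuples K L"
  using assms unfolding tuples_def by (auto intro!: inj_on_fun_updI)

lemma tuples_swap:
  assumes "i \<in> tuples K L" "s \<in> {1..L-1}" "t \<in> {1..L-1}"
  shows "Fun.swap s t i \<in> tuples K L"
  using assms unfolding tuples_def
  by (auto simp: inj_on_imp_inj_on_swap transpose_def)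

locale sorted_weights =
  fixes K L n :: nat and p :: "nat \<Rightarrow> real" and nn :: "nat \<Rightarrow> nat"
  assumes L_ge_3: "3 \<le> L" and L_le_K: "L \<le> K"
    and p_2_le_1: "p 2 \<le> p 1"
    and p_step: "\<And>k. 2 \<le> k \<Longrightarrow> k < K \<Longrightarrow> p (Suc k) \<le> p k"
    and p_K_nonneg: "0 \<le> p K"
    and nn_step: "\<And>t. 1 \<le> t \<Longrightarrow> t < L - 1 \<Longrightarrow> nn (Suc t) \<le> nn t"
begin

abbreviation "A \<equiv> A_val K L p nn n"

lemma p_antitone:
  assumes "1 \<le> a" "a \<le> b" "b \<le> K"
  shows "p b \<le> p a"
proof (cases "b = 1")
  case False
  have "p b \<le> p (max 2 a)"
    by (rule stepwise_antitone_le[of "max 2 a" K]) (use assms False p_step in auto)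
  thus ?thesis using assms p_2_le_1 by (cases "a = 1") (auto simp: numeral_2_eq_2)
qed (use assms in auto)

lemma p_nonneg: "k \<in> {1..K} \<Longrightarrow> 0 \<le> p k"
  using p_antitone[of k K] p_K_nonneg by auto

lemma nn_antitone: "1 \<le> s \<Longrightarrow> s \<le> t \<Longrightarrow> t \<le> L - 1 \<Longrightarrow> nn t \<le> nn s"
  by (rule stepwise_antitone_le[of s "L - 1"]) (auto intro: nn_step)

lemma A_replace_le:
  assumes i: "i \<in> tuples K L" and t: "t \<in> {1..L-1}" and j: "j \<in> {1..K} - i ` {1..L-1}"
    and "p (i t) \<le> p j"
  shows "A i \<le> A (i(t := j))"
proof -
  define J where "J = {1..K} - i ` {1..L-1} - {j}"
  have inj: "inj_on i {1..L-1}" and "i t \<in> {1..K}" using i t unfolding tuples_def by auto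
  have "(i(t := j)) ` {1..L-1} = insert j (i ` ({1..L-1} - {t}))"
    using t by (simp only: fun_upd_image if_True)
  also have "i ` ({1..L-1} - {t}) = i ` {1..L-1} - {i t}"
    using inj_on_image_set_diff[OF inj, of "{1..L-1}" "{t}"] t by simp
  finally have "(i(t := j)) ` {1..L-1} = insert j (i ` {1..L-1} - {i t})" .
  hence free': "{1..K} - (i(t := j)) ` {1..L-1} = insert (i t) J"
    using \<open>i t \<in> {1..K}\<close> t j unfolding J_def by auto
  have free: "{1..K} - i ` {1..L-1} = insert j J"
    using j unfolding J_def by auto
  have exchange: "p (i t) ^ nn t * S_sum p (insert j J) (nn (L-1)) N
      \<le> p j ^ nn t * S_sum p (insert (i t) J) (nn (L-1)) N" for N
  proof (rule S_sum_exchange_le)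
    show "finite J" "i t \<notin> J" "j \<notin> J" using t unfolding J_def by auto
    show "\<And>x. x \<in> insert (i t) J \<Longrightarrow> 0 \<le> p x"
      using \<open>i t \<in> {1..K}\<close> p_nonneg unfolding J_def by auto
    show "nn (L-1) \<le> nn t" using t by (intro nn_antitone) auto
  qed fact
  define R where "R = (\<Prod>s\<in>{1..L-1}-{t}. p (i s) ^ nn s)"
  have "0 \<le> R" unfolding R_def using i p_nonneg unfolding tuples_def by (auto intro!: prod_nonneg)
  have "(\<Prod>s=1..L-1. p (i s) ^ nn s) = p (i t) ^ nn t * R"
    unfolding R_def using prod.remove[of "{1..L-1}" t] t by simp
  moreover have "(\<Prod>s=1..L-1. p ((i(t := j)) s) ^ nn s) = p j ^ nn t * R"
    unfolding R_def using prod.remove[of "{1..L-1}" t "\<lambda>s. p ((i(t := j)) s) ^ nn s"] t by simp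
  ultimately show ?thesis
    unfolding A_val_def free free' using mult_right_mono[OF exchange \<open>0 \<le> R\<close>]
    by (simp add: ac_simps)
qed

lemma A_swap_le:
  assumes i: "i \<in> tuples K L" and s: "s \<in> {1..L-1}" and t: "t \<in> {1..L-1}"
    and "s < t" and le: "p (i s) \<le> p (i t)"
  shows "A i \<le> A (Fun.swap s t i)"
proof -
  define R where "R = (\<Prod>u\<in>{1..L-1} - {s, t}. p (i u) ^ nn u)"
  have split: "(\<Prod>u=1..L-1. p (f u) ^ nn u) = p (f s) ^ nn s * p (f t) ^ nn t
      * (\<Prod>u\<in>{1..L-1} - {s, t}. p (f u) ^ nn u)" for f
    using prod.subset_diff[of "{s, t}" "{1..L-1}" "\<lambda>u. p (f u) ^ nn u"] s t \<open>s < t\<close> by simp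
  have "(\<Prod>u\<in>{1..L-1} - {s, t}. p (Fun.swap s t i u) ^ nn u) = R"
    unfolding R_def by (rule prod.cong) auto
  hence swapped: "(\<Prod>u=1..L-1. p (Fun.swap s t i u) ^ nn u) = p (i t) ^ nn s * p (i s) ^ nn t * R"
    using split[of "Fun.swap s t i"] by simp
  have "p (i s) ^ nn s * p (i t) ^ nn t \<le> p (i t) ^ nn s * p (i s) ^ nn t"
    using i s t \<open>s < t\<close> le unfolding tuples_def
    by (intro power_exchange_le p_nonneg nn_antitone) auto
  moreover have "0 \<le> R" unfolding R_def using i p_nonneg unfolding tuples_def by (auto intro!: prod_nonneg)
  ultimately have "(\<Prod>u=1..L-1. p (i u) ^ nn u) \<le> (\<Prod>u=1..L-1. p (Fun.swap s t i u) ^ nn u)"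
    unfolding split[of i] R_def[symmetric] swapped by (rule mult_right_mono)
  moreover have "0 \<le> S_sum p ({1..K} - i ` {1..L-1}) (nn (L-1)) N" for N
    using p_nonneg by (intro S_sum_nonneg) auto
  ultimately show ?thesis
    unfolding A_val_def swap_image_eq[OF s t] by (rule mult_left_mono)
qed

lemma A_move_value_le:
  assumes i: "i \<in> tuples K L" and t: "t \<in> {1..L-1}" and v: "v \<in> {1..K}"
    and later: "\<And>s. s \<in> {1..L-1} \<Longrightarrow> i s = v \<Longrightarrow> t \<le> s" and le: "p (i t) \<le> p v"
  obtains i' where "i' \<in> tuples K L" "i' t = v" "\<And>u. u \<noteq> t \<Longrightarrow> i u \<noteq> v \<Longrightarrow> i' u = i u"
    "A i \<le> A i'"
proof (cases "v \<in> i ` {1..L-1}")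
  case True
  then obtain s where s: "s \<in> {1..L-1}" "i s = v" by auto
  show ?thesis
  proof (cases "s = t")
    case True
    thus ?thesis using that[of i] i s by auto
  next
    case False
    hence "t < s" using later s by force
    have "Fun.swap t s i u = i u" if "u \<noteq> t" "i u \<noteq> v" for u
      using that s by (cases "u = s") auto
    moreover have "Fun.swap t s i t = v" using s by simp
    ultimately show ?thesis
      using that[of "Fun.swap t s i"] i s t \<open>t < s\<close> le by (simp add: tuples_swap A_swap_le)
  qed
next
  case False
  hence "i(t := v) \<in> tuples K L" "A i \<le> A (i(t := v))"
    using i t v le by (auto intro: tuples_fun_upd A_replace_le)
  thus ?thesis using that[of "i(t := v)"] by simp
qed

lemma A_le_identity_extension:
  assumes "k \<le> L - 1" "i \<in> tuples K L" "i ` {1..k} = {1..k}"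
  shows "A i \<le> A (\<lambda>t. if t \<le> k then i t else t)"
  using assms
proof (induction k arbitrary: i rule: inc_induct)
  case base
  show ?case using A_val_cong[of L i "\<lambda>t. if t \<le> L - 1 then i t else t"] by simp
next
  case (step k)
  have inj: "inj_on i {1..L-1}" and range: "\<And>s. s \<in> {1..L-1} \<Longrightarrow> i s \<in> {1..K}"
    using step.prems(1) unfolding tuples_def by auto
  have "i (Suc k) \<notin> i ` {1..k}"
    using step.hyps by (subst inj_on_image_mem_iff[OF inj]) auto
  hence "Suc k \<le> i (Suc k)" "i (Suc k) \<le> K"
    using step.prems(2) range[of "Suc k"] step.hyps by auto
  hence le: "p (i (Suc k)) \<le> p (Suc k)" by (intro p_antitone) auto
  have later: "Suc k \<le> s" if "s \<in> {1..L-1}" "i s = Suc k" for s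
    using that step.prems(2) by (metis atLeastAtMost_iff imageI not_less_eq_eq order.refl)
  obtain i' where i': "i' \<in> tuples K L" "i' (Suc k) = Suc k"
    "\<And>u. u \<noteq> Suc k \<Longrightarrow> i u \<noteq> Suc k \<Longrightarrow> i' u = i u" "A i \<le> A i'"
    by (rule A_move_value_le[OF step.prems(1) _ _ later le]) (use step.hyps L_le_K in auto)
  have agree: "i' u = i u" if "u \<in> {1..k}" for u
  proof -
    have "i u \<in> {1..k}" using that step.prems(2) by blast
    thus ?thesis using i'(3)[of u] that by auto
  qed
  hence "i' ` {1..k} = i ` {1..k}" by (rule image_cong[OF refl])
  hence "i' ` {1..Suc k} = {1..Suc k}"
    using step.prems(2) i'(2) by (simp add: atLeastAtMostSuc_conv)
  hence "A i' \<le> A (\<lambda>t. if t \<le> Suc k then i' t else t)"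
    using step.IH i'(1) by blast
  also have "\<dots> = A (\<lambda>t. if t \<le> k then i t else t)"
    using agree i'(2) by (intro A_val_cong) (auto simp: le_Suc_eq)
  finally show ?case using i'(4) by simp
qed

lemma A_le_identity:
  assumes "i \<in> tuples K L" "i 1 = 1"
  shows "A i \<le> A (\<lambda>t. t)"
proof -
  have "A i \<le> A (\<lambda>t. if t \<le> 1 then i t else t)"
    using assms L_ge_3 by (intro A_le_identity_extension) auto
  also have "\<dots> = A (\<lambda>t. t)"
    using assms by (intro A_val_cong) auto
  finally show ?thesis .
qed

lemma A_le_transposed_identity:
  assumes i: "i \<in> tuples K L" and "i 1 \<noteq> 1"
  shows "A i \<le> A (\<lambda>t. if t = 1 then 2 else if t = 2 then 1 else t)"
proof -
  have "i 1 \<in> {1..K}" using i L_ge_3 unfolding tuples_def by auto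
  obtain i2 where i2: "i2 \<in> tuples K L" "i2 2 = 1" "i2 1 = i 1" "A i \<le> A i2"
  proof (rule A_move_value_le[OF i, of 2 1])
    show "2 \<le> s" if "s \<in> {1..L-1}" "i s = 1" for s
      using that \<open>i 1 \<noteq> 1\<close> by (cases "s = 1") auto
    show "p (i 2) \<le> p 1"
      using i L_ge_3 unfolding tuples_def by (intro p_antitone) auto
  qed (use L_ge_3 L_le_K \<open>i 1 \<noteq> 1\<close> in auto)
  obtain i3 where i3: "i3 \<in> tuples K L" "i3 1 = 2" "i3 2 = 1" "A i2 \<le> A i3"
  proof (rule A_move_value_le[OF i2(1), of 1 2])
    show "p (i2 1) \<le> p 2"
      using \<open>i 1 \<in> {1..K}\<close> \<open>i 1 \<noteq> 1\<close> i2(3) by (intro p_antitone) auto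
  qed (use L_ge_3 L_le_K i2(2) in auto)
  have "A i3 \<le> A (\<lambda>t. if t \<le> 2 then i3 t else t)"
    using i3 L_ge_3 by (intro A_le_identity_extension) (auto simp: numeral_2_eq_2 atLeastAtMostSuc_conv)
  also have "\<dots> = A (\<lambda>t. if t = 1 then 2 else if t = 2 then 1 else t)"
    using i3 by (intro A_val_cong) (auto simp: le_Suc_eq numeral_2_eq_2)
  finally show ?thesis using i2(4) i3(4) by simp
qed

end

theorem lemma2:
  fixes K L n :: nat and p :: "nat \<Rightarrow> real" and nn :: "nat \<Rightarrow> nat"
  assumes "K \<ge> 3" and "3 \<le> L" and "L \<le> K"
    and "p 1 > p 2"
    and "\<And>k. 2 \<le> k \<Longrightarrow> k < K \<Longrightarrow> p k \<ge> p (Suc k)"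
    and "p K > 0"
    and "(\<Sum>k=1..K. p k) = 1"
    and "\<And>t. 1 \<le> t \<Longrightarrow> t < L - 1 \<Longrightarrow> nn t \<ge> nn (Suc t)"
    and "nn (L-1) \<ge> 1"
    and "(\<Sum>t=1..L-1. nn t) \<le> n"
    and "n - (\<Sum>t=1..L-1. nn t) \<le> (K - L + 1) * nn (L-1)"
  shows "(\<lambda>t. t) \<in> tuples K L
     \<and> (\<forall>i\<in>tuples K L. i 1 = 1 \<longrightarrow> A_val K L p nn n i \<le> A_val K L p nn n (\<lambda>t. t))
     \<and> (\<lambda>t. if t = 1 then 2 else if t = 2 then 1 else t) \<in> tuples K L
     \<and> (\<forall>i\<in>tuples K L. i 1 \<noteq> 1 \<longrightarrow>
          A_val K L p nn n i \<le> A_val K L p nn n (\<lambda>t. if t = 1 then 2 else if t = 2 then 1 else t))"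
proof -
  interpret sorted_weights K L n p nn
    using assms by unfold_locales auto
  have identity: "(\<lambda>t. t) \<in> tuples K L"
    using L_le_K unfolding tuples_def by auto
  have "(\<lambda>t::nat. if t = 1 then 2 else if t = 2 then 1 else t) = Fun.swap 1 2 (\<lambda>t. t)"
    by (auto simp: transpose_def)
  hence "(\<lambda>t::nat. if t = 1 then 2 else if t = 2 then 1 else t) \<in> tuples K L"
    using tuples_swap[OF identity, of 1 2] L_ge_3 by simp
  thus ?thesis using identity A_le_identity A_le_transposed_identity by simp
qed

end
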